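(* Let $m\ge2$ and consider a preferential (dynamic) attachment circuit of index $m$. Let $Y_n^{(0)}$ and $Y_n^{(1)}$ be the numbers of nodes of outdegree $0$ and $1$ after $n$ insertions. Then, as $n\to\infty$, $\frac1n$ times the covariance matrix of the random vector $(Y_n^{(0)},Y_n^{(1)})^\top$ converges to $$\begin{pmatrix}\frac{2m^2(m+1)}{(3m+1)(2m+1)^2} & -\frac{4(m+1)^2m^2}{(4m+1)(3m+1)(2m+1)^2}\\[2pt] -\frac{4(m+1)^2m^2}{(4m+1)(3m+1)(2m+1)^2} & \frac{2m^2(m+1)(48m^3+59m^2+27m+4)}{(5m+1)(4m+1)(3m+1)^2(2m+1)^2}\end{pmatrix}.$$
   Context: Preferential (dynamic) attachment circuit of index $m\ge1$: at time $0$ there is a single node labeled $0$. At each time $n\ge1$ a new node labeled $n$ is added and $m$ parents are chosen for it one at a time, with replacement, among nodes $0,\dots,n-1$. Before the $(i+1)$-th choice ($i=0,\dots,m-1$), each existing node $v$ is chosen with probability $\frac{d_i(v)+1}{\sum_{x}(d_i(x)+1)}$, where $d_i(x)$ is the outdegree of $x$ in the current multigraph including the edges created by the first $i$ choices for node $n$; after each choice an edge from the chosen parent to node $n$ is immediately added (multi-edges allowed, counted with multiplicity). *)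

theory Defs
  imports "HOL-Probability.Probability"
begin

text \<open>States: the list of outdegrees of nodes 0..n (index = node label).\<close>

text \<open>One parent choice: node i chosen with probability (d(i)+1) / sum (d(x)+1);
  its outdegree is then incremented (edge added immediately).\<close>
definition pa_choose :: "nat list \<Rightarrow> nat list pmf" where
  "pa_choose ds =
     map_pmf (\<lambda>i. ds[i := ds ! i + 1])
       (pmf_of_multiset (\<Sum>i<length ds. replicate_mset (ds ! i + 1) i))"

fun pa_choose_iter :: "nat \<Rightarrow> nat list \<Rightarrow> nat list pmf" where
  "pa_choose_iter 0 ds = return_pmf ds"
| "pa_choose_iter (Suc k) ds = bind_pmf (pa_choose ds) (pa_choose_iter k)"

definition pa_step :: "nat \<Rightarrow> nat list \<Rightarrow> nat list pmf" where
  "pa_step m ds = map_pmf (\<lambda>ds'. ds' @ [0]) (pa_choose_iter m ds)"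

fun pa_circuit :: "nat \<Rightarrow> nat \<Rightarrow> nat list pmf" where
  "pa_circuit m 0 = return_pmf [0]"
| "pa_circuit m (Suc n) = bind_pmf (pa_circuit m n) (pa_step m)"

definition outdeg_count :: "nat \<Rightarrow> nat list \<Rightarrow> nat" where
  "outdeg_count k ds = length (filter (\<lambda>d. d = k) ds)"

definition pmf_cov :: "'a pmf \<Rightarrow> ('a \<Rightarrow> real) \<Rightarrow> ('a \<Rightarrow> real) \<Rightarrow> real" where
  "pmf_cov p X Y = measure_pmf.expectation p (\<lambda>x. (X x - measure_pmf.expectation p X) *
                                                  (Y x - measure_pmf.expectation p Y))"

definition Y_cov :: "nat \<Rightarrow> nat \<Rightarrow> nat \<Rightarrow> nat \<Rightarrow> real" where
  "Y_cov m n i j = pmf_cov (pa_circuit m n) (\<lambda>ds. real (outdeg_count i ds)) (\<lambda>ds. real (outdeg_count j ds))"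

end

theory Submission
  imports Defs
begin

text \<open>Write \<open>a\<close> and \<open>b\<close> for the numbers of nodes of outdegree 0 and 1 and \<open>W\<close> for the total
  weight \<open>\<Sum>(d+1)\<close>. One parent choice moves \<open>(a, b)\<close> to \<open>(a - 1, b + 1)\<close> with probability
  \<open>a/W\<close> and to \<open>(a, b - 1)\<close> with probability \<open>2b/W\<close>; a new node adds 1 to \<open>a\<close>. Tracked after
  every single parent choice, the means and (co)variances of \<open>(a, b)\<close> therefore obey recurrences
  \<open>x' = x + (h - c x)/W\<close> with \<open>W \<sim> (m + 1) n\<close> and an inhomogeneity \<open>h\<close> built from moments of
  lower order. If \<open>h \<sim> \<eta> n\<close> and every insertion adds \<open>\<delta>\<close>, such a recurrence forces
  \<open>x \<sim> (m \<eta> + (m + 1) \<delta>) n / ((c + 1) m + 1)\<close>. Solving successively for \<open>E a\<close>, \<open>E b\<close>,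
  \<open>Var a\<close>, \<open>Cov(a, b)\<close> and \<open>Var b\<close> gives the limits.\<close>

section \<open>Linear recurrences with slowly vanishing damping\<close>

lemma tendsto_one_of_rate:
  fixes a :: "nat \<Rightarrow> real"
  assumes "(\<lambda>n. real n * (1 - a n)) \<longlonglongrightarrow> \<sigma>"
  shows "a \<longlonglongrightarrow> 1"
proof -
  have "(\<lambda>n. 1 - (real n * (1 - a n)) * inverse (real n)) \<longlonglongrightarrow> 1 - \<sigma> * 0"
    by (intro tendsto_intros assms lim_inverse_n)
  moreover have "eventually (\<lambda>n. 1 - (real n * (1 - a n)) * inverse (real n) = a n) sequentially"
    using eventually_gt_at_top[of 0] by eventually_elim (simp add: field_simps)
  ultimately show ?thesis by (simp add: Lim_transform_eventually)
qed

lemma linear_recurrence_limit: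
  fixes x f b :: "nat \<Rightarrow> real"
  assumes rec: "\<And>n. x (Suc n) = f n * x n + b n"
    and f_bounded: "eventually (\<lambda>n. \<bar>f n\<bar> \<le> 1) sequentially"
    and rate: "(\<lambda>n. real n * (1 - f n)) \<longlonglongrightarrow> a"
    and b: "b \<longlonglongrightarrow> \<beta>"
  shows "(\<lambda>n. x n / real n) \<longlonglongrightarrow> \<beta> / (1 + a)"
proof -
  have "a \<ge> 0"
  proof (rule tendsto_lowerbound[OF rate])
    show "eventually (\<lambda>n. 0 \<le> real n * (1 - f n)) sequentially"
      using f_bounded by eventually_elim auto
  qed simp
  define c where "c = \<beta> / (1 + a)"
  define y where "y n = x n - c * real n" for n
  define e where "e n = b n - c - c * (real n * (1 - f n))" for n
  have y_rec: "y (Suc n) = f n * y n + e n" for n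
    unfolding y_def e_def rec by (simp add: algebra_simps)
  have "e \<longlonglongrightarrow> \<beta> - c - c * a"
    unfolding e_def by (intro tendsto_intros b rate)
  moreover have "\<beta> - c - c * a = 0"
    using \<open>a \<ge> 0\<close> unfolding c_def by (simp add: field_simps)
  ultimately have e: "e \<longlonglongrightarrow> 0" by simp
  have y: "(\<lambda>n. y n / real n) \<longlonglongrightarrow> 0"
  proof (rule LIMSEQ_I)
    fix r :: real assume r: "0 < r"
    have "eventually (\<lambda>n. \<bar>e n\<bar> < r / 2) sequentially"
      using e r by (auto simp: tendsto_iff dist_real_def dest!: spec[of _ "r / 2"])
    with f_bounded have "eventually (\<lambda>n. \<bar>f n\<bar> \<le> 1 \<and> \<bar>e n\<bar> < r / 2) sequentially"
      by eventually_elim auto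
    then obtain N where N: "\<And>n. n \<ge> N \<Longrightarrow> \<bar>f n\<bar> \<le> 1 \<and> \<bar>e n\<bar> < r / 2"
      by (auto simp: eventually_sequentially)
    have growth: "\<bar>y n\<bar> \<le> \<bar>y N\<bar> + r / 2 * (real n - real N)" if "n \<ge> N" for n
      using that
    proof (induction n rule: dec_induct)
      case (step k)
      have "\<bar>y (Suc k)\<bar> \<le> \<bar>f k\<bar> * \<bar>y k\<bar> + \<bar>e k\<bar>"
        unfolding y_rec by (metis abs_mult abs_triangle_ineq)
      also have "\<dots> \<le> \<bar>y k\<bar> + r / 2"
        using N[OF step(1)] by (intro add_mono mult_left_le_one_le) auto
      finally show ?case using step by (simp add: field_simps)
    qed simp
    obtain N' :: nat where N': "real N' > 2 * \<bar>y N\<bar> / r"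
      using reals_Archimedean2 by blast
    show "\<exists>no. \<forall>n\<ge>no. norm (y n / real n - 0) < r"
    proof (intro exI allI impI)
      fix n assume n: "n \<ge> max (Suc N) N'"
      have "2 * \<bar>y N\<bar> < r * real N'"
        using N' r by (simp add: field_simps)
      also have "\<dots> \<le> r * real n"
        using n r by (intro mult_left_mono) auto
      finally have "2 * \<bar>y N\<bar> < r * real n" .
      moreover have "\<bar>y n\<bar> \<le> \<bar>y N\<bar> + r / 2 * real n"
        using growth[of n] n r by (simp add: field_simps) (smt (verit) zero_le_mult_iff of_nat_0_le_iff)
      ultimately have "\<bar>y n\<bar> < r * real n" by simp
      then show "norm (y n / real n - 0) < r"
        using n by (simp add: abs_div field_simps)
    qed
  qed
  have "(\<lambda>n. y n / real n + c) \<longlonglongrightarrow> 0 + c"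
    by (intro tendsto_intros y)
  moreover have "eventually (\<lambda>n. y n / real n + c = x n / real n) sequentially"
    unfolding y_def using eventually_gt_at_top[of 0] by eventually_elim (auto simp: field_simps)
  ultimately show ?thesis
    unfolding c_def by (auto intro: Lim_transform_eventually)
qed

lemma affine_chain_limits:
  fixes x a b :: "nat \<Rightarrow> nat \<Rightarrow> real"
  assumes step: "\<And>n j. j < k \<Longrightarrow> x n (Suc j) = a n j * x n j + b n j"
    and rate: "\<And>j. j < k \<Longrightarrow> (\<lambda>n. real n * (1 - a n j)) \<longlonglongrightarrow> \<sigma>"
    and drift: "\<And>j. j < k \<Longrightarrow> (\<lambda>n. b n j) \<longlonglongrightarrow> \<gamma>"
    and bounded: "\<And>j. j < k \<Longrightarrow> eventually (\<lambda>n. 0 \<le> a n j \<and> a n j \<le> 1) sequentially"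
  shows "\<exists>A B. (\<forall>n. x n k = A n * x n 0 + B n) \<and> (\<lambda>n. real n * (1 - A n)) \<longlonglongrightarrow> real k * \<sigma>
    \<and> B \<longlonglongrightarrow> real k * \<gamma> \<and> eventually (\<lambda>n. 0 \<le> A n \<and> A n \<le> 1) sequentially"
  using assms
proof (induction k)
  case 0
  show ?case by (rule exI[of _ "\<lambda>n. 1"], rule exI[of _ "\<lambda>n. 0"]) simp
next
  case (Suc k)
  have "\<exists>A B. (\<forall>n. x n k = A n * x n 0 + B n) \<and> (\<lambda>n. real n * (1 - A n)) \<longlonglongrightarrow> real k * \<sigma>
    \<and> B \<longlonglongrightarrow> real k * \<gamma> \<and> eventually (\<lambda>n. 0 \<le> A n \<and> A n \<le> 1) sequentially"
    by (rule Suc.IH) (use Suc.prems in auto)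
  then obtain A B where AB: "\<And>n. x n k = A n * x n 0 + B n"
      "(\<lambda>n. real n * (1 - A n)) \<longlonglongrightarrow> real k * \<sigma>" "B \<longlonglongrightarrow> real k * \<gamma>"
      "eventually (\<lambda>n. 0 \<le> A n \<and> A n \<le> 1) sequentially"
    by blast
  have a: "(\<lambda>n. real n * (1 - a n k)) \<longlonglongrightarrow> \<sigma>"
    using Suc.prems(2) by simp
  then have a1: "(\<lambda>n. a n k) \<longlonglongrightarrow> 1"
    by (rule tendsto_one_of_rate)
  show ?case
  proof (intro exI conjI allI)
    show "x n (Suc k) = (a n k * A n) * x n 0 + (a n k * B n + b n k)" for n
      using Suc.prems(1)[of k n] AB(1)[of n] by (simp add: algebra_simps)
    have "(\<lambda>n. real n * (1 - a n k) + a n k * (real n * (1 - A n))) \<longlonglongrightarrow> \<sigma> + 1 * (real k * \<sigma>)"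
      by (intro tendsto_intros a a1 AB(2))
    then show "(\<lambda>n. real n * (1 - a n k * A n)) \<longlonglongrightarrow> real (Suc k) * \<sigma>"
      by (simp add: algebra_simps)
    have "(\<lambda>n. a n k * B n + b n k) \<longlonglongrightarrow> 1 * (real k * \<gamma>) + \<gamma>"
      by (intro tendsto_intros a1 AB(3) Suc.prems(3)) simp
    then show "(\<lambda>n. a n k * B n + b n k) \<longlonglongrightarrow> real (Suc k) * \<gamma>"
      by (simp add: algebra_simps)
    show "eventually (\<lambda>n. 0 \<le> a n k * A n \<and> a n k * A n \<le> 1) sequentially"
    proof -
      have "eventually (\<lambda>n. 0 \<le> a n k \<and> a n k \<le> 1) sequentially"
        using Suc.prems(4) by simp
      with AB(4) show ?thesis by eventually_elim (auto intro: mult_le_one)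
    qed
  qed
qed

lemma block_recurrence_limit:
  fixes x a b :: "nat \<Rightarrow> nat \<Rightarrow> real"
  assumes step: "\<And>n j. j < m \<Longrightarrow> x n (Suc j) = a n j * x n j + b n j"
    and next_block: "\<And>n. x (Suc n) 0 = x n m + \<delta>"
    and rate: "\<And>j. j < m \<Longrightarrow> (\<lambda>n. real n * (1 - a n j)) \<longlonglongrightarrow> \<sigma>"
    and drift: "\<And>j. j < m \<Longrightarrow> (\<lambda>n. b n j) \<longlonglongrightarrow> \<gamma>"
    and bounded: "\<And>j. j < m \<Longrightarrow> eventually (\<lambda>n. 0 \<le> a n j \<and> a n j \<le> 1) sequentially"
    and "j \<le> m"
  shows "(\<lambda>n. x n j / real n) \<longlonglongrightarrow> (real m * \<gamma> + \<delta>) / (1 + real m * \<sigma>)"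
proof -
  let ?L = "(real m * \<gamma> + \<delta>) / (1 + real m * \<sigma>)"
  obtain A B where AB: "\<And>n. x n m = A n * x n 0 + B n"
      "(\<lambda>n. real n * (1 - A n)) \<longlonglongrightarrow> real m * \<sigma>" "B \<longlonglongrightarrow> real m * \<gamma>"
      "eventually (\<lambda>n. 0 \<le> A n \<and> A n \<le> 1) sequentially"
  proof -
    have "\<exists>A B. (\<forall>n. x n m = A n * x n 0 + B n) \<and> (\<lambda>n. real n * (1 - A n)) \<longlonglongrightarrow> real m * \<sigma>
      \<and> B \<longlonglongrightarrow> real m * \<gamma> \<and> eventually (\<lambda>n. 0 \<le> A n \<and> A n \<le> 1) sequentially"
      by (rule affine_chain_limits[where a = a and b = b]) (use step rate drift bounded in auto)
    then show thesis using that by blast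
  qed
  have start: "(\<lambda>n. x n 0 / real n) \<longlonglongrightarrow> ?L"
  proof (rule linear_recurrence_limit)
    show "x (Suc n) 0 = A n * x n 0 + (B n + \<delta>)" for n
      using next_block[of n] AB(1)[of n] by simp
    show "eventually (\<lambda>n. \<bar>A n\<bar> \<le> 1) sequentially"
      using AB(4) by eventually_elim auto
    show "(\<lambda>n. B n + \<delta>) \<longlonglongrightarrow> real m * \<gamma> + \<delta>"
      by (intro tendsto_intros AB(3))
  qed (rule AB(2))
  obtain A' B' where AB': "\<And>n. x n j = A' n * x n 0 + B' n"
      "(\<lambda>n. real n * (1 - A' n)) \<longlonglongrightarrow> real j * \<sigma>" "B' \<longlonglongrightarrow> real j * \<gamma>"
  proof -
    have "\<exists>A B. (\<forall>n. x n j = A n * x n 0 + B n) \<and> (\<lambda>n. real n * (1 - A n)) \<longlonglongrightarrow> real j * \<sigma>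
      \<and> B \<longlonglongrightarrow> real j * \<gamma> \<and> eventually (\<lambda>n. 0 \<le> A n \<and> A n \<le> 1) sequentially"
      by (rule affine_chain_limits[where a = a and b = b]) (use step rate drift bounded \<open>j \<le> m\<close> in auto)
    then show thesis using that by blast
  qed
  have "(\<lambda>n. A' n * (x n 0 / real n) + B' n * inverse (real n)) \<longlonglongrightarrow> 1 * ?L + real j * \<gamma> * 0"
    by (intro tendsto_intros start AB'(3) lim_inverse_n tendsto_one_of_rate[OF AB'(2)])
  then show ?thesis
    by (simp add: AB'(1) add_divide_distrib divide_inverse distrib_right mult.assoc)
qed

section \<open>One parent choice\<close>

lemma expectation_bind_pmf_finite:
  fixes h :: "'b \<Rightarrow> real"
  assumes "finite (set_pmf p)" and "\<And>x. x \<in> set_pmf p \<Longrightarrow> finite (set_pmf (f x))"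
  shows "measure_pmf.expectation (bind_pmf p f) h =
         measure_pmf.expectation p (\<lambda>x. measure_pmf.expectation (f x) h)"
  using assms by (simp add: pmf_expectation_bind[where A = "set_pmf p"] integral_measure_pmf[of "set_pmf p"])

abbreviation cnt :: "nat \<Rightarrow> nat list \<Rightarrow> real" where
  "cnt k ds \<equiv> real (outdeg_count k ds)"

definition choice_weights :: "nat list \<Rightarrow> nat multiset" where
  "choice_weights ds = (\<Sum>i<length ds. replicate_mset (ds ! i + 1) i)"

definition list_weight :: "nat list \<Rightarrow> real" where
  "list_weight ds = real (sum_list ds + length ds)"

lemma pa_choose_eq: "pa_choose ds = map_pmf (\<lambda>i. ds[i := ds ! i + 1]) (pmf_of_multiset (choice_weights ds))"
  unfolding pa_choose_def choice_weights_def ..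

lemma count_choice_weights:
  "count (choice_weights ds) i = (if i < length ds then ds ! i + 1 else 0)"
  unfolding choice_weights_def count_sum count_replicate_mset by (auto simp: sum.delta)

lemma sum_nth_Suc: "(\<Sum>i<length ds. ds ! i + 1) = sum_list ds + length ds"
  by (subst sum.distrib) (simp add: sum_list_sum_nth atLeast0LessThan)

lemma in_choice_weights: "i \<in># choice_weights ds \<longleftrightarrow> i < length ds"
  unfolding count_greater_zero_iff[symmetric] count_choice_weights by simp

lemma size_choice_weights: "size (choice_weights ds) = sum_list ds + length ds"
  unfolding choice_weights_def size_multiset_sum size_replicate_mset by (rule sum_nth_Suc)

lemma choice_weights_nonempty: "ds \<noteq> [] \<Longrightarrow> choice_weights ds \<noteq> {#}"
  using size_choice_weights[of ds] by auto

lemma set_pmf_pa_choose: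
  "ds \<noteq> [] \<Longrightarrow> set_pmf (pa_choose ds) = (\<lambda>i. ds[i := ds ! i + 1]) ` {..<length ds}"
  unfolding pa_choose_eq using choice_weights_nonempty[of ds]
  by (auto simp: in_choice_weights)

lemma expectation_pa_choose:
  assumes "ds \<noteq> []"
  shows "measure_pmf.expectation (pa_choose ds) h =
     (\<Sum>i<length ds. (real (ds ! i) + 1) * h (ds[i := ds ! i + 1])) / list_weight ds"
proof -
  let ?M = "choice_weights ds"
  have ne: "?M \<noteq> {#}" using assms by (rule choice_weights_nonempty)
  have "measure_pmf.expectation (pa_choose ds) h =
      measure_pmf.expectation (pmf_of_multiset ?M) (\<lambda>i. h (ds[i := ds ! i + 1]))"
    unfolding pa_choose_eq by simp
  also have "\<dots> = (\<Sum>i<length ds. pmf (pmf_of_multiset ?M) i *\<^sub>R h (ds[i := ds ! i + 1]))"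
    using ne by (intro integral_measure_pmf) (auto simp: in_choice_weights)
  also have "\<dots> = (\<Sum>i<length ds. (real (ds ! i) + 1) * h (ds[i := ds ! i + 1]) / list_weight ds)"
    using ne by (intro sum.cong) (auto simp: count_choice_weights size_choice_weights list_weight_def)
  finally show ?thesis by (simp add: sum_divide_distrib)
qed

lemma outdeg_count_eq_sum: "real (outdeg_count k ds) = (\<Sum>i<length ds. if ds ! i = k then 1 else 0)"
proof -
  have "real (outdeg_count k ds) = sum_list (map (\<lambda>d. if d = k then 1 else 0) ds)"
    unfolding outdeg_count_def by (induction ds) auto
  then show ?thesis by (simp add: sum_list_sum_nth atLeast0LessThan)
qed

lemma outdeg_count_update:
  assumes "i < length ds"
  shows "cnt k (ds[i := v]) = cnt k ds - (if ds ! i = k then 1 else 0) + (if v = k then 1 else 0)"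
proof -
  have "cnt k (ds[i := v]) = (\<Sum>j<length ds. if ds[i := v] ! j = k then 1 else 0)"
    by (simp add: outdeg_count_eq_sum)
  also have "\<dots> = (\<Sum>j<length ds. (if ds ! j = k then 1 else 0)
      + (if j = i then (if v = k then 1 else 0) - (if ds ! i = k then 1 else 0) else 0))"
    by (intro sum.cong) (auto simp: nth_list_update)
  also have "\<dots> = cnt k ds - (if ds ! i = k then 1 else 0) + (if v = k then 1 else 0)"
    using assms by (simp add: sum.distrib outdeg_count_eq_sum)
  finally show ?thesis .
qed

lemma expectation_pa_choose_counts:
  assumes "ds \<noteq> []"
  defines "a \<equiv> cnt 0 ds" and "b \<equiv> cnt 1 ds"
  shows "measure_pmf.expectation (pa_choose ds) (\<lambda>x. F (cnt 0 x) (cnt 1 x)) =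
     F a b + (a * (F (a - 1) (b + 1) - F a b) + 2 * b * (F a (b - 1) - F a b)) / list_weight ds"
proof -
  define C A0 A1 where "C = F a b" and "A0 = F (a - 1) (b + 1) - F a b"
    and "A1 = F a (b - 1) - F a b"
  let ?ind = "\<lambda>k i. if ds ! i = k then 1 else 0 :: real"
  have step: "(real (ds ! i) + 1) * F (cnt 0 (ds[i := ds ! i + 1])) (cnt 1 (ds[i := ds ! i + 1]))
      = (real (ds ! i) + 1) * C + ?ind 0 i * A0 + 2 * ?ind 1 i * A1" if "i < length ds" for i
    using that unfolding C_def A0_def A1_def
    by (cases "ds ! i = 0"; cases "ds ! i = 1") (auto simp: outdeg_count_update a_def b_def)
  have weight: "(\<Sum>i<length ds. real (ds ! i) + 1) = list_weight ds"
    unfolding list_weight_def sum_nth_Suc[symmetric] by (simp add: add.commute)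
  have "(\<Sum>i<length ds. (real (ds ! i) + 1) * F (cnt 0 (ds[i := ds ! i + 1])) (cnt 1 (ds[i := ds ! i + 1])))
      = (\<Sum>i<length ds. (real (ds ! i) + 1) * C + ?ind 0 i * A0 + 2 * ?ind 1 i * A1)"
    by (rule sum.cong[OF refl], rule step) simp
  also have "\<dots> = list_weight ds * C + a * A0 + 2 * b * A1"
    unfolding a_def b_def outdeg_count_eq_sum weight[symmetric]
    by (simp only: sum.distrib mult.assoc flip: sum_distrib_right sum_distrib_left)
  finally have sum_eq: "(\<Sum>i<length ds. (real (ds ! i) + 1) * F (cnt 0 (ds[i := ds ! i + 1])) (cnt 1 (ds[i := ds ! i + 1])))
      = list_weight ds * C + a * A0 + 2 * b * A1" .
  moreover have "list_weight ds > 0"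
    using \<open>ds \<noteq> []\<close> unfolding list_weight_def by (simp add: of_nat_add[symmetric] del: of_nat_add)
  ultimately show ?thesis
    using assms sum_eq by (simp add: expectation_pa_choose C_def A0_def A1_def field_simps)
qed

lemma set_pmf_pa_choose_length_sum:
  assumes "ds \<noteq> []" "x \<in> set_pmf (pa_choose ds)"
  shows "length x = length ds \<and> sum_list x = Suc (sum_list ds)"
proof -
  obtain i where i: "i < length ds" "x = ds[i := ds ! i + 1]"
    using assms by (auto simp: set_pmf_pa_choose)
  have "ds ! i \<le> sum_list ds" using i(1) by (rule elem_le_sum_list)
  then show ?thesis using i sum_list_update[OF i(1), of "ds ! i + 1"] by simp
qed

section \<open>The process observed after every parent choice\<close>

lemma pa_choose_iter_0: "pa_choose_iter 0 = return_pmf"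
  by (rule ext) simp

lemma pa_choose_iter_Suc_right:
  "pa_choose_iter (Suc k) ds = bind_pmf (pa_choose_iter k ds) pa_choose"
proof (induction k arbitrary: ds)
  case 0
  then show ?case by (simp add: bind_return_pmf bind_return_pmf' pa_choose_iter_0)
next
  case (Suc k)
  have "pa_choose_iter (Suc (Suc k)) ds = bind_pmf (pa_choose ds) (pa_choose_iter (Suc k))"
    by simp
  also have "pa_choose_iter (Suc k) = (\<lambda>x. bind_pmf (pa_choose_iter k x) pa_choose)"
    by (rule ext) (rule Suc.IH)
  also have "bind_pmf (pa_choose ds) (\<lambda>x. bind_pmf (pa_choose_iter k x) pa_choose)
      = bind_pmf (pa_choose_iter (Suc k) ds) pa_choose"
    by (simp add: bind_assoc_pmf)
  finally show ?case .
qed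

definition pa_partial :: "nat \<Rightarrow> nat \<Rightarrow> nat \<Rightarrow> nat list pmf" where
  "pa_partial m n j = bind_pmf (pa_circuit m n) (pa_choose_iter j)"

lemma pa_partial_0: "pa_partial m n 0 = pa_circuit m n"
  unfolding pa_partial_def pa_choose_iter_0 by (simp add: bind_return_pmf')

lemma pa_partial_Suc: "pa_partial m n (Suc j) = bind_pmf (pa_partial m n j) pa_choose"
  unfolding pa_partial_def pa_choose_iter_Suc_right by (simp add: bind_assoc_pmf)

lemma pa_circuit_Suc_partial: "pa_circuit m (Suc n) = map_pmf (\<lambda>ds. ds @ [0]) (pa_partial m n m)"
  unfolding pa_partial_def by (simp add: map_bind_pmf pa_step_def[abs_def])

lemma set_pmf_pa_partial_Suc:
  assumes "\<And>x. x \<in> set_pmf (pa_partial m n j) \<Longrightarrow> length x = Suc n \<and> sum_list x = n * m + j"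
    and "ds \<in> set_pmf (pa_partial m n (Suc j))"
  shows "length ds = Suc n \<and> sum_list ds = n * m + Suc j"
proof -
  obtain x where x: "x \<in> set_pmf (pa_partial m n j)" "ds \<in> set_pmf (pa_choose x)"
    using assms(2) by (auto simp: pa_partial_Suc)
  have "x \<noteq> []" using assms(1)[OF x(1)] by auto
  with x assms(1)[OF x(1)] show ?thesis by (auto dest: set_pmf_pa_choose_length_sum)
qed

lemma set_pmf_pa_partial:
  "ds \<in> set_pmf (pa_partial m n j) \<Longrightarrow> length ds = Suc n \<and> sum_list ds = n * m + j"
proof (induction n arbitrary: j ds)
  case 0
  then show ?case
  proof (induction j arbitrary: ds)
    case 0
    then show ?case by (simp add: pa_partial_0)
  next
    case (Suc j)
    then show ?case using set_pmf_pa_partial_Suc[of m 0 j ds] by simp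
  qed
next
  case (Suc n)
  then show ?case
  proof (induction j arbitrary: ds)
    case 0
    then have "ds \<in> set_pmf (map_pmf (\<lambda>ds. ds @ [0]) (pa_partial m n m))"
      unfolding pa_partial_0 pa_circuit_Suc_partial by blast
    then obtain x where "x \<in> set_pmf (pa_partial m n m)" "ds = x @ [0]"
      by auto
    then show ?case using Suc.IH[of x m] by simp
  next
    case (Suc j)
    then show ?case using set_pmf_pa_partial_Suc[of m "Suc n" j ds] by simp
  qed
qed

lemma finite_set_pmf_pa_partial: "finite (set_pmf (pa_partial m n j))"
proof (rule finite_subset)
  show "set_pmf (pa_partial m n j) \<subseteq> {ds. set ds \<subseteq> {..n * m + j} \<and> length ds = Suc n}"
    using set_pmf_pa_partial member_le_sum_list by fastforce
  show "finite {ds. set ds \<subseteq> {..n * m + j} \<and> length ds = Suc n}"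
    by (rule finite_lists_length_eq) simp
qed

definition pa_weight :: "nat \<Rightarrow> nat \<Rightarrow> nat \<Rightarrow> real" where
  "pa_weight m n j = real ((m + 1) * n + 1 + j)"

lemma pa_weight_pos: "pa_weight m n j > 0"
  unfolding pa_weight_def by (intro of_nat_0_less_iff[THEN iffD2]) simp

lemma list_weight_pa_partial:
  "ds \<in> set_pmf (pa_partial m n j) \<Longrightarrow> list_weight ds = pa_weight m n j"
  using set_pmf_pa_partial[of ds m n j] unfolding list_weight_def pa_weight_def
  by (simp add: algebra_simps)

definition count_moment :: "nat \<Rightarrow> nat \<Rightarrow> nat \<Rightarrow> (real \<Rightarrow> real \<Rightarrow> real) \<Rightarrow> real" where
  "count_moment m n j F = measure_pmf.expectation (pa_partial m n j) (\<lambda>ds. F (cnt 0 ds) (cnt 1 ds))"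

lemma integrable_pa_partial [simp]: "integrable (measure_pmf (pa_partial m n j)) (f :: nat list \<Rightarrow> real)"
  by (intro integrable_measure_pmf_finite finite_set_pmf_pa_partial)

lemma count_moment_add: "count_moment m n j (\<lambda>a b. F a b + G a b) = count_moment m n j F + count_moment m n j G"
  unfolding count_moment_def by (simp add: Bochner_Integration.integral_add)

lemma count_moment_diff: "count_moment m n j (\<lambda>a b. F a b - G a b) = count_moment m n j F - count_moment m n j G"
  unfolding count_moment_def by (simp add: Bochner_Integration.integral_diff)

lemma count_moment_mult: "count_moment m n j (\<lambda>a b. c * F a b) = c * count_moment m n j F"
  unfolding count_moment_def by simp

lemma count_moment_const: "count_moment m n j (\<lambda>a b. c) = c"
  unfolding count_moment_def by simp

lemma count_moment_insert: "count_moment m (Suc n) 0 F = count_moment m n m (\<lambda>a b. F (a + 1) b)"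
proof -
  have "cnt k (ds @ [0]) = cnt k ds + (if k = 0 then 1 else 0)" for k ds
    unfolding outdeg_count_def by simp
  then show ?thesis
    unfolding count_moment_def pa_partial_0 pa_circuit_Suc_partial by simp
qed

lemma count_moment_Suc:
  "count_moment m n (Suc j) F = count_moment m n j F + count_moment m n j
      (\<lambda>a b. a * (F (a - 1) (b + 1) - F a b) + 2 * b * (F a (b - 1) - F a b)) / pa_weight m n j"
  (is "_ = _ + count_moment m n j ?D / _")
proof -
  have nonempty: "ds \<noteq> []" if "ds \<in> set_pmf (pa_partial m n j)" for ds
    using set_pmf_pa_partial[OF that] by auto
  have "count_moment m n (Suc j) F = measure_pmf.expectation (pa_partial m n j)
      (\<lambda>ds. measure_pmf.expectation (pa_choose ds) (\<lambda>x. F (cnt 0 x) (cnt 1 x)))"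
    unfolding count_moment_def pa_partial_Suc
    by (intro expectation_bind_pmf_finite finite_set_pmf_pa_partial)
      (auto simp: set_pmf_pa_choose nonempty)
  also have "\<dots> = count_moment m n j (\<lambda>a b. F a b + ?D a b / pa_weight m n j)"
    unfolding count_moment_def
  proof (intro integral_cong_AE)
    show "AE ds in measure_pmf (pa_partial m n j).
        measure_pmf.expectation (pa_choose ds) (\<lambda>x. F (cnt 0 x) (cnt 1 x)) =
        F (cnt 0 ds) (cnt 1 ds) + ?D (cnt 0 ds) (cnt 1 ds) / pa_weight m n j"
      unfolding AE_measure_pmf_iff
      using expectation_pa_choose_counts[OF nonempty] list_weight_pa_partial by simp
  qed auto
  finally show ?thesis
    unfolding count_moment_def by (simp add: Bochner_Integration.integral_add)
qed

lemma n_div_pa_weight_tendsto: "(\<lambda>n. real n / pa_weight m n j) \<longlonglongrightarrow> 1 / (real m + 1)"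
proof -
  have "(\<lambda>n. 1 / ((real m + 1) + real (Suc j) * inverse (real n)))
      \<longlonglongrightarrow> 1 / ((real m + 1) + real (Suc j) * 0)"
    by (intro tendsto_intros lim_inverse_n) simp
  moreover have "eventually (\<lambda>n. 1 / ((real m + 1) + real (Suc j) * inverse (real n))
      = real n / pa_weight m n j) sequentially"
    using eventually_gt_at_top[of 0] by eventually_elim (simp add: pa_weight_def field_simps)
  ultimately show ?thesis by (simp add: Lim_transform_eventually)
qed

lemma div_pa_weight_tendsto:
  assumes "(\<lambda>n. x n / real n) \<longlonglongrightarrow> l"
  shows "(\<lambda>n. x n / pa_weight m n j) \<longlonglongrightarrow> l / (real m + 1)"
proof -
  have "(\<lambda>n. (x n / real n) * (real n / pa_weight m n j)) \<longlonglongrightarrow> l * (1 / (real m + 1))"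
    by (intro tendsto_intros assms n_div_pa_weight_tendsto)
  moreover have "eventually (\<lambda>n. (x n / real n) * (real n / pa_weight m n j) = x n / pa_weight m n j) sequentially"
    using eventually_gt_at_top[of 0] by eventually_elim simp
  ultimately show ?thesis by (simp add: Lim_transform_eventually)
qed

lemma product_div_pa_weight_tendsto:
  assumes "(\<lambda>n. x n / real n) \<longlonglongrightarrow> p" and "(\<lambda>n. y n / real n) \<longlonglongrightarrow> q"
  shows "(\<lambda>n. x n * y n / pa_weight m n j / real n) \<longlonglongrightarrow> p * q / (real m + 1)"
proof -
  have "(\<lambda>n. (x n / real n) * (y n / pa_weight m n j)) \<longlonglongrightarrow> p * (q / (real m + 1))"
    by (intro tendsto_intros assms div_pa_weight_tendsto)
  then show ?thesis by (simp add: field_simps)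
qed

lemma eventually_le_pa_weight: "eventually (\<lambda>n. c \<le> pa_weight m n j) sequentially"
  using eventually_ge_at_top[of "nat \<lceil>c\<rceil>"]
proof eventually_elim
  case (elim n)
  have "c \<le> real n"
    using real_nat_ceiling_ge[of c] elim by (meson of_nat_le_iff order_trans)
  also have "\<dots> \<le> pa_weight m n j"
    unfolding pa_weight_def by simp
  finally show ?case .
qed

lemma pa_recurrence_limit:
  fixes x h :: "nat \<Rightarrow> nat \<Rightarrow> real"
  assumes step: "\<And>n j. j < m \<Longrightarrow> x n (Suc j) = x n j + (h n j - c * x n j) / pa_weight m n j"
    and next_block: "\<And>n. x (Suc n) 0 = x n m + \<delta>"
    and h: "\<And>j. j < m \<Longrightarrow> (\<lambda>n. h n j / real n) \<longlonglongrightarrow> \<eta>"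
    and "c \<ge> 0" and "j \<le> m"
  shows "(\<lambda>n. x n j / real n) \<longlonglongrightarrow> (real m * \<eta> + (real m + 1) * \<delta>) / ((c + 1) * real m + 1)"
proof -
  have "(\<lambda>n. x n j / real n) \<longlonglongrightarrow>
      (real m * (\<eta> / (real m + 1)) + \<delta>) / (1 + real m * (c * (1 / (real m + 1))))"
  proof (rule block_recurrence_limit[where a = "\<lambda>n j. 1 - c / pa_weight m n j"
        and b = "\<lambda>n j. h n j / pa_weight m n j"])
    show "x n (Suc j) = (1 - c / pa_weight m n j) * x n j + h n j / pa_weight m n j"
      if "j < m" for n j
      using step[OF that, of n] pa_weight_pos[of m n j] by (simp add: field_simps)
    show "(\<lambda>n. real n * (1 - (1 - c / pa_weight m n j))) \<longlonglongrightarrow> c * (1 / (real m + 1))" for j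
      using tendsto_mult[OF tendsto_const[of c] n_div_pa_weight_tendsto[of m j]] by (simp add: mult.commute)
    show "(\<lambda>n. h n j / pa_weight m n j) \<longlonglongrightarrow> \<eta> / (real m + 1)" if "j < m" for j
      using that by (intro div_pa_weight_tendsto h)
    show "eventually (\<lambda>n. 0 \<le> 1 - c / pa_weight m n j \<and> 1 - c / pa_weight m n j \<le> 1) sequentially" for j
      using eventually_le_pa_weight[of c m j]
      by eventually_elim (use \<open>c \<ge> 0\<close> in \<open>simp add: pa_weight_pos field_simps\<close>)
  qed (use next_block \<open>j \<le> m\<close> in auto)
  also have "(real m * (\<eta> / (real m + 1)) + \<delta>) / (1 + real m * (c * (1 / (real m + 1))))
      = (real m * \<eta> + (real m + 1) * \<delta>) / ((c + 1) * real m + 1)"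
  proof -
    have "real m * (\<eta> / (real m + 1)) + \<delta> = (real m * \<eta> + (real m + 1) * \<delta>) / (real m + 1)"
      "1 + real m * (c * (1 / (real m + 1))) = ((c + 1) * real m + 1) / (real m + 1)"
      by (simp_all add: field_simps)
    then show ?thesis by simp
  qed
  finally show ?thesis .
qed

section \<open>Means and covariances of the outdegree counts\<close>

definition mean0 :: "nat \<Rightarrow> nat \<Rightarrow> nat \<Rightarrow> real" where
  "mean0 m n j = count_moment m n j (\<lambda>a b. a)"

definition mean1 :: "nat \<Rightarrow> nat \<Rightarrow> nat \<Rightarrow> real" where
  "mean1 m n j = count_moment m n j (\<lambda>a b. b)"

definition cov00 :: "nat \<Rightarrow> nat \<Rightarrow> nat \<Rightarrow> real" where
  "cov00 m n j = count_moment m n j (\<lambda>a b. a * a) - mean0 m n j ^ 2"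

definition cov01 :: "nat \<Rightarrow> nat \<Rightarrow> nat \<Rightarrow> real" where
  "cov01 m n j = count_moment m n j (\<lambda>a b. a * b) - mean0 m n j * mean1 m n j"

definition cov11 :: "nat \<Rightarrow> nat \<Rightarrow> nat \<Rightarrow> real" where
  "cov11 m n j = count_moment m n j (\<lambda>a b. b * b) - mean1 m n j ^ 2"

lemma mean0_Suc: "mean0 m n (Suc j) = mean0 m n j - mean0 m n j / pa_weight m n j"
proof -
  have "(\<lambda>a b::real. a * ((a - 1) - a) + 2 * b * (a - a)) = (\<lambda>a b. (- 1) * a)"
    by (intro ext) simp
  then show ?thesis
    unfolding mean0_def count_moment_Suc by (simp only: count_moment_mult)
qed

lemma mean1_Suc: "mean1 m n (Suc j) = mean1 m n j + (mean0 m n j - 2 * mean1 m n j) / pa_weight m n j"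
proof -
  have "(\<lambda>a b::real. a * (b + 1 - b) + 2 * b * (b - 1 - b)) = (\<lambda>a b. a - 2 * b)"
    by (intro ext) (simp add: algebra_simps)
  then show ?thesis
    unfolding mean0_def mean1_def count_moment_Suc by (simp only: count_moment_mult count_moment_diff)
qed

lemma second_moments_Suc:
  fixes m n j :: nat
  defines "E \<equiv> count_moment m n j" and "w \<equiv> pa_weight m n j"
  shows "count_moment m n (Suc j) (\<lambda>a b. a * a) = E (\<lambda>a b. a * a) + (mean0 m n j - 2 * E (\<lambda>a b. a * a)) / w"
    and "count_moment m n (Suc j) (\<lambda>a b. a * b)
      = E (\<lambda>a b. a * b) + (E (\<lambda>a b. a * a) - 3 * E (\<lambda>a b. a * b) - mean0 m n j) / w"
    and "count_moment m n (Suc j) (\<lambda>a b. b * b) = E (\<lambda>a b. b * b)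
      + (2 * E (\<lambda>a b. a * b) + mean0 m n j + 2 * mean1 m n j - 4 * E (\<lambda>a b. b * b)) / w"
proof -
  have "(\<lambda>a b::real. a * ((a - 1) * (a - 1) - a * a) + 2 * b * (a * a - a * a)) = (\<lambda>a b. a - 2 * (a * a))"
    by (intro ext) (simp add: algebra_simps)
  then show "count_moment m n (Suc j) (\<lambda>a b. a * a) = E (\<lambda>a b. a * a) + (mean0 m n j - 2 * E (\<lambda>a b. a * a)) / w"
    unfolding E_def w_def mean0_def count_moment_Suc by (simp only: count_moment_mult count_moment_diff)
  have "(\<lambda>a b::real. a * ((a - 1) * (b + 1) - a * b) + 2 * b * (a * (b - 1) - a * b))
      = (\<lambda>a b. a * a - 3 * (a * b) - a)"
    by (intro ext) (simp add: algebra_simps)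
  then show "count_moment m n (Suc j) (\<lambda>a b. a * b)
      = E (\<lambda>a b. a * b) + (E (\<lambda>a b. a * a) - 3 * E (\<lambda>a b. a * b) - mean0 m n j) / w"
    unfolding E_def w_def mean0_def count_moment_Suc by (simp only: count_moment_mult count_moment_diff)
  have "(\<lambda>a b::real. a * ((b + 1) * (b + 1) - b * b) + 2 * b * ((b - 1) * (b - 1) - b * b))
      = (\<lambda>a b. 2 * (a * b) + a + 2 * b - 4 * (b * b))"
    by (intro ext) (simp add: algebra_simps)
  then show "count_moment m n (Suc j) (\<lambda>a b. b * b) = E (\<lambda>a b. b * b)
      + (2 * E (\<lambda>a b. a * b) + mean0 m n j + 2 * mean1 m n j - 4 * E (\<lambda>a b. b * b)) / w"
    unfolding E_def w_def mean0_def mean1_def count_moment_Suc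
    by (simp only: count_moment_mult count_moment_diff count_moment_add)
qed

lemma cov00_Suc: "cov00 m n (Suc j) = cov00 m n j
    + (mean0 m n j - mean0 m n j * mean0 m n j / pa_weight m n j - 2 * cov00 m n j) / pa_weight m n j"
  using pa_weight_pos[of m n j]
  unfolding cov00_def second_moments_Suc mean0_Suc by (simp add: field_simps power2_eq_square)

lemma cov01_Suc: "cov01 m n (Suc j) = cov01 m n j + (cov00 m n j - mean0 m n j
    - mean0 m n j * (2 * mean1 m n j - mean0 m n j) / pa_weight m n j - 3 * cov01 m n j) / pa_weight m n j"
  using pa_weight_pos[of m n j]
  unfolding cov00_def cov01_def second_moments_Suc mean0_Suc mean1_Suc
  by (simp add: field_simps power2_eq_square)

lemma cov11_Suc: "cov11 m n (Suc j) = cov11 m n j + (2 * cov01 m n j + mean0 m n j + 2 * mean1 m n j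
    - (2 * mean1 m n j - mean0 m n j) * (2 * mean1 m n j - mean0 m n j) / pa_weight m n j
    - 4 * cov11 m n j) / pa_weight m n j"
  using pa_weight_pos[of m n j]
  unfolding cov01_def cov11_def second_moments_Suc mean0_Suc mean1_Suc
  by (simp add: field_simps power2_eq_square)

lemma moments_insert:
  "mean0 m (Suc n) 0 = mean0 m n m + 1"
  "mean1 m (Suc n) 0 = mean1 m n m"
  "cov00 m (Suc n) 0 = cov00 m n m"
  "cov01 m (Suc n) 0 = cov01 m n m"
  "cov11 m (Suc n) 0 = cov11 m n m"
proof -
  have square: "(\<lambda>(a::real) (b::real). (a + 1) * (a + 1)) = (\<lambda>a b. a * a + 2 * a + 1)"
    and product: "(\<lambda>(a::real) (b::real). (a + 1) * b) = (\<lambda>a b. a * b + b)"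
    by (simp_all add: algebra_simps)
  show "mean0 m (Suc n) 0 = mean0 m n m + 1" "mean1 m (Suc n) 0 = mean1 m n m"
    unfolding mean0_def mean1_def count_moment_insert by (simp_all add: count_moment_add count_moment_const)
  then show "cov00 m (Suc n) 0 = cov00 m n m" "cov01 m (Suc n) 0 = cov01 m n m"
      "cov11 m (Suc n) 0 = cov11 m n m"
    unfolding cov00_def cov01_def cov11_def count_moment_insert square product
    by (simp_all only: count_moment_add count_moment_const count_moment_mult)
      (simp_all add: mean0_def mean1_def algebra_simps power2_eq_square)
qed

section \<open>Asymptotics of the moments\<close>

lemma mean0_limit:
  assumes "j \<le> m"
  shows "(\<lambda>n. mean0 m n j / real n) \<longlonglongrightarrow> (real m + 1) / (2 * real m + 1)"
proof -
  have "(\<lambda>n. mean0 m n j / real n) \<longlonglongrightarrow> (real m * 0 + (real m + 1) * 1) / ((1 + 1) * real m + 1)"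
    by (rule pa_recurrence_limit[where h = "\<lambda>n j. 0"])
      (use assms in \<open>simp_all add: mean0_Suc moments_insert\<close>)
  then show ?thesis by simp
qed

lemma mean1_limit:
  assumes "j \<le> m"
  shows "(\<lambda>n. mean1 m n j / real n) \<longlonglongrightarrow> real m * (real m + 1) / ((2 * real m + 1) * (3 * real m + 1))"
proof -
  have "(\<lambda>n. mean1 m n j / real n) \<longlonglongrightarrow>
      (real m * ((real m + 1) / (2 * real m + 1)) + (real m + 1) * 0) / ((2 + 1) * real m + 1)"
    by (rule pa_recurrence_limit[where h = "mean0 m"])
      (use assms in \<open>simp_all add: mean1_Suc moments_insert mean0_limit\<close>)
  then show ?thesis by (simp add: field_simps)
qed

lemma cov00_limit:
  assumes "j \<le> m"
  shows "(\<lambda>n. cov00 m n j / real n) \<longlonglongrightarrow>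
    2 * real m ^ 2 * (real m + 1) / ((3 * real m + 1) * (2 * real m + 1) ^ 2)"
proof -
  let ?\<alpha> = "(real m + 1) / (2 * real m + 1)"
  let ?\<eta> = "?\<alpha> - ?\<alpha> * ?\<alpha> / (real m + 1)"
  have h: "(\<lambda>n. (mean0 m n j - mean0 m n j * mean0 m n j / pa_weight m n j) / real n) \<longlonglongrightarrow> ?\<eta>"
    if "j < m" for j
  proof -
    have "(\<lambda>n. mean0 m n j / real n - mean0 m n j * mean0 m n j / pa_weight m n j / real n) \<longlonglongrightarrow> ?\<eta>"
      using that by (intro tendsto_intros product_div_pa_weight_tendsto mean0_limit) simp_all
    then show ?thesis by (simp add: diff_divide_distrib)
  qed
  have "(\<lambda>n. cov00 m n j / real n) \<longlonglongrightarrow> (real m * ?\<eta> + (real m + 1) * 0) / ((2 + 1) * real m + 1)"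
    by (rule pa_recurrence_limit[OF _ _ h]) (use assms in \<open>simp_all add: cov00_Suc moments_insert\<close>)
  moreover have "(real m * ?\<eta> + (real m + 1) * 0) / ((2 + 1) * real m + 1)
      = 2 * real m ^ 2 * (real m + 1) / ((3 * real m + 1) * (2 * real m + 1) ^ 2)"
    by (simp add: divide_simps add_pos_pos) algebra
  ultimately show ?thesis by simp
qed

lemma cov01_limit:
  assumes "j \<le> m"
  shows "(\<lambda>n. cov01 m n j / real n) \<longlonglongrightarrow>
    - (4 * (real m + 1) ^ 2 * real m ^ 2 / ((4 * real m + 1) * (3 * real m + 1) * (2 * real m + 1) ^ 2))"
proof -
  let ?\<alpha> = "(real m + 1) / (2 * real m + 1)"
  let ?\<beta> = "real m * (real m + 1) / ((2 * real m + 1) * (3 * real m + 1))"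
  let ?v = "2 * real m ^ 2 * (real m + 1) / ((3 * real m + 1) * (2 * real m + 1) ^ 2)"
  let ?\<eta> = "?v - ?\<alpha> - ?\<alpha> * (2 * ?\<beta> - ?\<alpha>) / (real m + 1)"
  have h: "(\<lambda>n. (cov00 m n j - mean0 m n j
      - mean0 m n j * (2 * mean1 m n j - mean0 m n j) / pa_weight m n j) / real n) \<longlonglongrightarrow> ?\<eta>"
    if "j < m" for j
  proof -
    have "(\<lambda>n. (2 * mean1 m n j - mean0 m n j) / real n) \<longlonglongrightarrow> 2 * ?\<beta> - ?\<alpha>"
      using tendsto_diff[OF tendsto_mult[OF tendsto_const[of 2] mean1_limit] mean0_limit] that
      by (simp add: diff_divide_distrib)
    then have "(\<lambda>n. cov00 m n j / real n - mean0 m n j / real n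
        - mean0 m n j * (2 * mean1 m n j - mean0 m n j) / pa_weight m n j / real n) \<longlonglongrightarrow> ?\<eta>"
      using that by (intro tendsto_intros product_div_pa_weight_tendsto mean0_limit cov00_limit) simp_all
    then show ?thesis by (simp add: diff_divide_distrib)
  qed
  have "(\<lambda>n. cov01 m n j / real n) \<longlonglongrightarrow> (real m * ?\<eta> + (real m + 1) * 0) / ((3 + 1) * real m + 1)"
    by (rule pa_recurrence_limit[OF _ _ h]) (use assms in \<open>simp_all add: cov01_Suc moments_insert\<close>)
  moreover have "(real m * ?\<eta> + (real m + 1) * 0) / ((3 + 1) * real m + 1)
      = - (4 * (real m + 1) ^ 2 * real m ^ 2 / ((4 * real m + 1) * (3 * real m + 1) * (2 * real m + 1) ^ 2))"
    by (simp add: divide_simps add_pos_pos) algebra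
  ultimately show ?thesis by simp
qed

lemma cov11_limit:
  assumes "j \<le> m"
  shows "(\<lambda>n. cov11 m n j / real n) \<longlonglongrightarrow>
    2 * real m ^ 2 * (real m + 1) * (48 * real m ^ 3 + 59 * real m ^ 2 + 27 * real m + 4)
      / ((5 * real m + 1) * (4 * real m + 1) * (3 * real m + 1) ^ 2 * (2 * real m + 1) ^ 2)"
proof -
  let ?\<alpha> = "(real m + 1) / (2 * real m + 1)"
  let ?\<beta> = "real m * (real m + 1) / ((2 * real m + 1) * (3 * real m + 1))"
  let ?v = "- (4 * (real m + 1) ^ 2 * real m ^ 2 / ((4 * real m + 1) * (3 * real m + 1) * (2 * real m + 1) ^ 2))"
  let ?\<eta> = "2 * ?v + ?\<alpha> + 2 * ?\<beta> - (2 * ?\<beta> - ?\<alpha>) * (2 * ?\<beta> - ?\<alpha>) / (real m + 1)"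
  have h: "(\<lambda>n. (2 * cov01 m n j + mean0 m n j + 2 * mean1 m n j
      - (2 * mean1 m n j - mean0 m n j) * (2 * mean1 m n j - mean0 m n j) / pa_weight m n j) / real n)
      \<longlonglongrightarrow> ?\<eta>"
    if "j < m" for j
  proof -
    have d: "(\<lambda>n. (2 * mean1 m n j - mean0 m n j) / real n) \<longlonglongrightarrow> 2 * ?\<beta> - ?\<alpha>"
      using tendsto_diff[OF tendsto_mult[OF tendsto_const[of 2] mean1_limit] mean0_limit] that
      by (simp add: diff_divide_distrib)
    have "(\<lambda>n. 2 * (cov01 m n j / real n) + mean0 m n j / real n + 2 * (mean1 m n j / real n)
        - (2 * mean1 m n j - mean0 m n j) * (2 * mean1 m n j - mean0 m n j) / pa_weight m n j / real n)
        \<longlonglongrightarrow> ?\<eta>"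
      using that by (intro tendsto_intros product_div_pa_weight_tendsto d mean0_limit mean1_limit cov01_limit)
        simp_all
    then show ?thesis by (simp add: add_divide_distrib diff_divide_distrib)
  qed
  have "(\<lambda>n. cov11 m n j / real n) \<longlonglongrightarrow> (real m * ?\<eta> + (real m + 1) * 0) / ((4 + 1) * real m + 1)"
    by (rule pa_recurrence_limit[OF _ _ h]) (use assms in \<open>simp_all add: cov11_Suc moments_insert\<close>)
  moreover have "(real m * ?\<eta> + (real m + 1) * 0) / ((4 + 1) * real m + 1)
      = 2 * real m ^ 2 * (real m + 1) * (48 * real m ^ 3 + 59 * real m ^ 2 + 27 * real m + 4)
      / ((5 * real m + 1) * (4 * real m + 1) * (3 * real m + 1) ^ 2 * (2 * real m + 1) ^ 2)"
    by (simp add: divide_simps add_pos_pos) algebra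
  ultimately show ?thesis by simp
qed

section \<open>The covariance matrix\<close>

lemma pmf_cov_eq_expectation:
  fixes X Y :: "'a \<Rightarrow> real"
  assumes "finite (set_pmf p)"
  shows "pmf_cov p X Y = measure_pmf.expectation p (\<lambda>x. X x * Y x)
     - measure_pmf.expectation p X * measure_pmf.expectation p Y"
proof -
  have int: "integrable (measure_pmf p) f" for f :: "'a \<Rightarrow> real"
    using assms by (rule integrable_measure_pmf_finite)
  define a b where "a = measure_pmf.expectation p X" and "b = measure_pmf.expectation p Y"
  have "pmf_cov p X Y = measure_pmf.expectation p (\<lambda>x. (X x * Y x - b * X x) - (a * Y x - a * b))"
    unfolding pmf_cov_def a_def[symmetric] b_def[symmetric] by (simp add: algebra_simps)
  also have "\<dots> = measure_pmf.expectation p (\<lambda>x. X x * Y x) - b * a - (a * b - a * b)"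
    by (simp add: int Bochner_Integration.integral_diff a_def b_def)
  finally show ?thesis by (simp add: a_def b_def)
qed

lemma Y_cov_eq:
  "Y_cov m n 0 0 = cov00 m n 0" "Y_cov m n 0 1 = cov01 m n 0"
  "Y_cov m n 1 0 = cov01 m n 0" "Y_cov m n 1 1 = cov11 m n 0"
  using finite_set_pmf_pa_partial[of m n 0]
  unfolding Y_cov_def pa_partial_0[symmetric]
  by (simp_all add: pmf_cov_eq_expectation cov00_def cov01_def cov11_def mean0_def mean1_def
      count_moment_def power2_eq_square mult.commute)

text \<open>The limits hold for every \<open>m\<close>.\<close>

theorem corollary1:
  fixes m :: nat
  assumes "m \<ge> 2"
  shows "((\<lambda>n. Y_cov m n 0 0 / real n) \<longlonglongrightarrow>
           2 * real m ^ 2 * (real m + 1) / ((3 * real m + 1) * (2 * real m + 1) ^ 2)) \<and>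
         ((\<lambda>n. Y_cov m n 0 1 / real n) \<longlonglongrightarrow>
           - (4 * (real m + 1) ^ 2 * real m ^ 2 / ((4 * real m + 1) * (3 * real m + 1) * (2 * real m + 1) ^ 2))) \<and>
         ((\<lambda>n. Y_cov m n 1 0 / real n) \<longlonglongrightarrow>
           - (4 * (real m + 1) ^ 2 * real m ^ 2 / ((4 * real m + 1) * (3 * real m + 1) * (2 * real m + 1) ^ 2))) \<and>
         ((\<lambda>n. Y_cov m n 1 1 / real n) \<longlonglongrightarrow>
           2 * real m ^ 2 * (real m + 1) * (48 * real m ^ 3 + 59 * real m ^ 2 + 27 * real m + 4)
             / ((5 * real m + 1) * (4 * real m + 1) * (3 * real m + 1) ^ 2 * (2 * real m + 1) ^ 2))"
  unfolding Y_cov_eq using cov00_limit cov01_limit cov11_limit by simp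

end
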